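(* Let $\Omega\subset\mathbb{R}^d$ be open and $\phi:\Omega\to\mathbb{R}^{n+1}$ an $n$-times differentiable nondegenerate map. Then for every nonzero linear functional $\ell:\mathbb{R}^{n+1}\to\mathbb{R}$, the set $\{s\in\Omega:\ell(\phi(s))=0\}$ has Lebesgue measure zero. Moreover, if $d=1$, then $\phi^{-1}(\ker\ell)$ is discrete in $\Omega$.
   Context: A curve $\zeta$ in $\mathbb{R}^k$ is nondegenerate at a point if its derivatives there of orders $0,\dots,k-1$ exist and span $\mathbb{R}^k$. $\phi$ is nondegenerate at $s\in\Omega$ if: (1) $D\phi(s):\mathbb{R}^d\to\mathbb{R}^{n+1}$ is injective; let $\mathcal{T}=D\phi(s)(\mathbb{R}^d)$; (2) there are a subspace $\mathcal{L}\ni\phi(s)$ of $\mathbb{R}^{n+1}$ with $\mathcal{T}\oplus\mathcal{L}=\mathbb{R}^{n+1}$, $0\ne v\in\mathcal{T}$, a neighborhood $\Omega_1$ of $s$ and $r_0>0$ such that the curve $\rho_v(r)=\phi(\Omega_1)\cap(rv+\mathcal{L})$, $|r|<r_0$, is nondegenerate at $0$ as a curve in $\mathbb{R}v+\mathcal{L}$. $\phi$ is nondegenerate if it is nondegenerate at every point of $\Omega$. *)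

theory Defs
  imports "HOL-Analysis.Analysis"
begin

text \<open>m-times differentiability on an (open) set: f is Frechet differentiable at every
  point of S with derivative f' x, and for every direction v the map x \<mapsto> f' x v is
  (m-1)-times differentiable on S (equivalently, f' is (m-1)-times differentiable as a map
  into the finite-dimensional space of linear maps).\<close>
primrec ntimes_differentiable_on ::
  "nat \<Rightarrow> ('a::real_normed_vector \<Rightarrow> 'b::real_normed_vector) \<Rightarrow> 'a set \<Rightarrow> bool" where
  "ntimes_differentiable_on 0 f S = True"
| "ntimes_differentiable_on (Suc m) f S =
     (\<exists>f'. (\<forall>x\<in>S. (f has_derivative f' x) (at x)) \<and>
           (\<forall>v. ntimes_differentiable_on m (\<lambda>x. f' x v) S))"

text \<open>D j is the j-th derivative;
  derivatives of order < k-1 exist on a neighbourhood of t0, the (k-1)-st at t0.\<close>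
definition curve_nondegenerate_at ::
  "(real \<Rightarrow> 'b::euclidean_space) \<Rightarrow> real \<Rightarrow> 'b set \<Rightarrow> bool" where
  "curve_nondegenerate_at \<rho> t0 V =
     (let k = dim V in
      \<exists>D e. e > 0 \<and> (\<forall>t\<in>ball t0 e. D 0 t = \<rho> t) \<and>
        (\<forall>j t. Suc j < k \<and> t \<in> ball t0 e \<and> (Suc j < k - 1 \<or> t = t0) \<longrightarrow>
               (D j has_vector_derivative D (Suc j) t) (at t)) \<and>
        span {D j t0 | j. j < k} = V)"

definition nondegenerate_at ::
  "('a::euclidean_space \<Rightarrow> 'b::euclidean_space) \<Rightarrow> 'a set \<Rightarrow> 'a \<Rightarrow> bool" where
  "nondegenerate_at \<phi> \<Omega> s =
     (\<exists>\<phi>'. (\<phi> has_derivative \<phi>') (at s) \<and> inj \<phi>' \<and>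
       (\<exists>L v \<Omega>1 r0 \<rho>.
          subspace L \<and> \<phi> s \<in> L \<and>
          range \<phi>' \<inter> L = {0} \<and> {x + y | x y. x \<in> range \<phi>' \<and> y \<in> L} = UNIV \<and>
          v \<in> range \<phi>' \<and> v \<noteq> 0 \<and>
          \<Omega>1 \<subseteq> \<Omega> \<and> s \<in> interior \<Omega>1 \<and> r0 > 0 \<and>
          (\<forall>r. \<bar>r\<bar> < r0 \<longrightarrow> \<phi> ` \<Omega>1 \<inter> {r *\<^sub>R v + y | y. y \<in> L} = {\<rho> r}) \<and>
          curve_nondegenerate_at \<rho> 0 (span (insert v L))))"

definition nondegenerate_map ::
  "('a::euclidean_space \<Rightarrow> 'b::euclidean_space) \<Rightarrow> 'a set \<Rightarrow> bool" where
  "nondegenerate_map \<phi> \<Omega> = (\<forall>s\<in>\<Omega>. nondegenerate_at \<phi> \<Omega> s)"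

end

theory Submission
  imports Defs
begin

text \<open>
  Write g = l o phi and let n be the dimension of the target minus one, but at least 1. The
  zeros of g at which g is not o(|t - s|^n) form a null set: by induction on n, such a point is
  a zero of g or of a partial derivative of g where that function has nonzero derivative, and
  near such points a chart with invertible derivative maps the zero set into a hyperplane.

  At a nondegenerate point s, g is never that flat. The projection F of phi along L has
  derivative id at s, so by the open mapping theorem the curve point rho r equals phi t for some
  t with |t - s| = O(|r|). Hence l o rho would be o(|r|^n) at 0, and a Peano form of Taylor's
  theorem makes l vanish on the first n + 1 derivatives of rho at 0, which span span(v, L).
  Since dg(s) = 0, l also vanishes on the tangent space, so l = 0.

  For d = 1 every point near s lies on the curve at a nonzero parameter, so zeros of g
  accumulating at s give zeros of l o rho accumulating at 0. By Rolle's theorem the zeros of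
  each derivative of l o rho accumulate at 0 as well, so l vanishes on span(v, L), which for
  d = 1 is the whole space.
\<close>

section \<open>Flatness at a point\<close>

definition vanishes_to_order :: "('a::real_normed_vector \<Rightarrow> real) \<Rightarrow> 'a \<Rightarrow> nat \<Rightarrow> bool" where
  "vanishes_to_order g s p \<longleftrightarrow>
     (\<forall>\<epsilon>>0. \<forall>\<^sub>F t in nhds s. \<bar>g t\<bar> \<le> \<epsilon> * norm (t - s) ^ p)"

lemma vanishes_to_order_imp_zero:
  assumes "vanishes_to_order g s p"
  shows "g s = 0"
proof -
  have "\<bar>g s\<bar> \<le> \<epsilon>" if "\<epsilon> > 0" for \<epsilon>
  proof -
    have "\<bar>g s\<bar> \<le> \<epsilon> * norm (s - s) ^ p"
      using assms that unfolding vanishes_to_order_def by (blast dest: eventually_nhds_x_imp_x)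
    also have "\<dots> \<le> \<epsilon>"
      using that by (cases p) auto
    finally show ?thesis .
  qed
  then show ?thesis
    by (metis abs_le_zero_iff dense not_le)
qed

lemma vanishes_to_order_mono:
  assumes "vanishes_to_order g s p" "q \<le> p"
  shows "vanishes_to_order g s q"
  unfolding vanishes_to_order_def
proof (intro allI impI)
  fix \<epsilon> :: real assume "\<epsilon> > 0"
  have "\<forall>\<^sub>F t in nhds s. norm (t - s) \<le> 1"
    using eventually_nhds_metric_le[of "\<lambda>t. norm (t - s) \<le> 1" s]
    by (metis dist_norm zero_less_one)
  moreover have "\<forall>\<^sub>F t in nhds s. \<bar>g t\<bar> \<le> \<epsilon> * norm (t - s) ^ p"
    using assms(1) \<open>\<epsilon> > 0\<close> unfolding vanishes_to_order_def by blast
  ultimately show "\<forall>\<^sub>F t in nhds s. \<bar>g t\<bar> \<le> \<epsilon> * norm (t - s) ^ q"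
    by eventually_elim
      (meson assms(2) \<open>\<epsilon> > 0\<close> less_eq_real_def mult_left_mono norm_ge_zero order.trans power_decreasing)
qed

lemma vanishes_to_order_cong:
  assumes "\<forall>\<^sub>F t in nhds s. f t = g t" "vanishes_to_order f s p"
  shows "vanishes_to_order g s p"
  using assms unfolding vanishes_to_order_def by (auto elim: eventually_elim2)

lemma vanishes_to_order_diff:
  assumes "vanishes_to_order f s p" "vanishes_to_order g s p"
  shows "vanishes_to_order (\<lambda>t. f t - g t) s p"
  unfolding vanishes_to_order_def
proof (intro allI impI)
  fix \<epsilon> :: real assume "\<epsilon> > 0"
  then have "\<forall>\<^sub>F t in nhds s. \<bar>f t\<bar> \<le> \<epsilon>/2 * norm (t - s) ^ p \<and> \<bar>g t\<bar> \<le> \<epsilon>/2 * norm (t - s) ^ p"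
    using assms unfolding vanishes_to_order_def by (simp add: eventually_conj del: times_divide_eq_left)
  then show "\<forall>\<^sub>F t in nhds s. \<bar>f t - g t\<bar> \<le> \<epsilon> * norm (t - s) ^ p"
    by eventually_elim linarith
qed

lemma vanishes_to_order_1_iff:
  "vanishes_to_order g s 1 \<longleftrightarrow> g s = 0 \<and> (g has_derivative (\<lambda>_. 0)) (at s)"
proof
  assume van: "vanishes_to_order g s 1"
  have "g s = 0" using vanishes_to_order_imp_zero[OF van] .
  moreover have "\<exists>d>0. \<forall>t. norm (t - s) < d \<longrightarrow> \<bar>g t - g s\<bar> \<le> \<epsilon> * norm (t - s)"
    if "\<epsilon> > 0" for \<epsilon>
    using van that \<open>g s = 0\<close> unfolding vanishes_to_order_def eventually_nhds_metric dist_norm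
    by auto
  ultimately show "g s = 0 \<and> (g has_derivative (\<lambda>_. 0)) (at s)"
    unfolding has_derivative_at_alt by simp
next
  assume "g s = 0 \<and> (g has_derivative (\<lambda>_. 0)) (at s)"
  then show "vanishes_to_order g s 1"
    unfolding has_derivative_at_alt vanishes_to_order_def eventually_nhds_metric dist_norm
    by fastforce
qed

lemma vanishes_to_order_monomial:
  assumes "vanishes_to_order (\<lambda>r. c * r ^ m) (0::real) m"
  shows "c = 0"
proof -
  have "\<bar>c\<bar> \<le> \<epsilon>" if "\<epsilon> > 0" for \<epsilon>
  proof -
    obtain d where "d > 0" and d: "\<And>r. \<bar>r\<bar> < d \<Longrightarrow> \<bar>c * r ^ m\<bar> \<le> \<epsilon> * \<bar>r\<bar> ^ m"
      using assms \<open>\<epsilon> > 0\<close> unfolding vanishes_to_order_def eventually_nhds_metric dist_real_def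
      by fastforce
    have "\<bar>c\<bar> * (d/2) ^ m \<le> \<epsilon> * (d/2) ^ m"
      using d[of "d/2"] \<open>d > 0\<close> by (simp add: abs_mult power_abs)
    then show ?thesis using \<open>d > 0\<close> by simp
  qed
  then show ?thesis
    by (metis abs_le_zero_iff dense not_le)
qed

lemma norm_le_of_derivative_power_bound:
  fixes f :: "'a::real_normed_vector \<Rightarrow> 'b::real_normed_vector"
  assumes "f s = 0" "t \<in> ball s d"
    and "\<And>x. x \<in> ball s d \<Longrightarrow> (f has_derivative f' x) (at x)"
    and "\<And>x. x \<in> ball s d \<Longrightarrow> onorm (f' x) \<le> e * norm (x - s) ^ i" and "e \<ge> 0"
  shows "norm (f t) \<le> e * norm (t - s) ^ Suc i"
proof -
  define r where "r = norm (t - s)"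
  have sub: "cball s r \<subseteq> ball s d"
    using assms(2) by (auto simp: r_def dist_norm norm_minus_commute)
  have "norm (f t - f s) \<le> (e * r ^ i) * norm (t - s)"
  proof (rule differentiable_bound[of "cball s r" f f'])
    show "(f has_derivative f' x) (at x within cball s r)" if "x \<in> cball s r" for x
      using assms(3) sub that has_derivative_at_withinI by blast
    show "onorm (f' x) \<le> e * r ^ i" if "x \<in> cball s r" for x
    proof -
      have "norm (x - s) \<le> r" using that by (simp add: dist_norm norm_minus_commute)
      then have "e * norm (x - s) ^ i \<le> e * r ^ i"
        by (simp add: assms(5) mult_left_mono power_mono)
      then show ?thesis using assms(4) sub that by force
    qed
  qed (auto simp: r_def dist_norm norm_minus_commute)
  then show ?thesis using assms(1) by (simp add: r_def mult_ac)
qed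

text \<open>The partial derivatives bound the norm of the derivative, and the mean value inequality
  integrates flatness of order p to flatness of order p + 1.\<close>
lemma vanishes_to_order_Suc:
  fixes g :: "'a::euclidean_space \<Rightarrow> real"
  assumes "g s = 0" and deriv: "\<forall>\<^sub>F x in nhds s. (g has_derivative g' x) (at x)"
    and partials: "\<And>b. b \<in> Basis \<Longrightarrow> vanishes_to_order (\<lambda>x. g' x b) s p"
  shows "vanishes_to_order g s (Suc p)"
  unfolding vanishes_to_order_def
proof (intro allI impI)
  fix \<epsilon> :: real assume "\<epsilon> > 0"
  define \<epsilon>' where "\<epsilon>' = \<epsilon> / DIM('a)"
  have "\<epsilon>' > 0" using \<open>\<epsilon> > 0\<close> by (simp add: \<epsilon>'_def)
  then have "\<forall>\<^sub>F x in nhds s. \<forall>b\<in>Basis. \<bar>g' x b\<bar> \<le> \<epsilon>' * norm (x - s) ^ p"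
    using partials by (intro eventually_ball_finite) (auto simp: vanishes_to_order_def)
  with deriv have "\<forall>\<^sub>F x in nhds s. (g has_derivative g' x) (at x) \<and>
      (\<forall>b\<in>Basis. \<bar>g' x b\<bar> \<le> \<epsilon>' * norm (x - s) ^ p)"
    by (rule eventually_conj)
  then obtain d where "d > 0" and d: "\<And>x. x \<in> ball s d \<Longrightarrow>
      (g has_derivative g' x) (at x) \<and> (\<forall>b\<in>Basis. \<bar>g' x b\<bar> \<le> \<epsilon>' * norm (x - s) ^ p)"
    unfolding eventually_nhds_metric by (auto simp: dist_commute)
  have "onorm (g' x) \<le> \<epsilon> * norm (x - s) ^ p" if "x \<in> ball s d" for x
  proof -
    have "onorm (g' x) \<le> (\<Sum>b\<in>Basis. \<bar>g' x b\<bar>)"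
      using d[OF that] onorm_componentwise has_derivative_bounded_linear by fastforce
    also have "\<dots> \<le> (\<Sum>b\<in>(Basis::'a set). \<epsilon>' * norm (x - s) ^ p)"
      using d[OF that] by (intro sum_mono) auto
    also have "\<dots> = \<epsilon> * norm (x - s) ^ p"
      by (simp add: \<epsilon>'_def)
    finally show ?thesis .
  qed
  then have "\<bar>g t\<bar> \<le> \<epsilon> * norm (t - s) ^ Suc p" if "t \<in> ball s d" for t
    using norm_le_of_derivative_power_bound[of g s t d g' \<epsilon> p] \<open>g s = 0\<close> d \<open>\<epsilon> > 0\<close> that
    by auto
  then show "\<forall>\<^sub>F t in nhds s. \<bar>g t\<bar> \<le> \<epsilon> * norm (t - s) ^ Suc p"
    unfolding eventually_nhds_metric using \<open>d > 0\<close> by (auto simp: dist_commute)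
qed

lemma vanishes_to_order_Suc_real:
  fixes g :: "real \<Rightarrow> real"
  assumes "g s = 0" "\<forall>\<^sub>F x in nhds s. (g has_real_derivative g' x) (at x)"
    and "vanishes_to_order g' s p"
  shows "vanishes_to_order g s (Suc p)"
  using assms
  by (intro vanishes_to_order_Suc[where g' = "\<lambda>x h. g' x * h"])
     (auto simp: has_field_derivative_def)

section \<open>Null sets of non-flat zeros\<close>

text \<open>Replacing the b-coordinate by g is a chart with invertible derivative near these points,
  and it maps the zero set into a hyperplane.\<close>
lemma negligible_zeros_nonzero_partial_derivative:
  fixes g :: "'a::euclidean_space \<Rightarrow> real"
  assumes deriv: "\<And>x. x \<in> \<Omega> \<Longrightarrow> (g has_derivative g' x) (at x)" and b: "b \<in> Basis"
  shows "negligible {x\<in>\<Omega>. g x = 0 \<and> g' x b \<noteq> 0}"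
proof -
  define S where "S = {x\<in>\<Omega>. g x = 0 \<and> g' x b \<noteq> 0}"
  define h where "h x = x - (x \<bullet> b) *\<^sub>R b + g x *\<^sub>R b" for x
  define h' where "h' x w = w - (w \<bullet> b) *\<^sub>R b + g' x w *\<^sub>R b" for x w
  have bb: "b \<bullet> b = 1" using b by simp
  have "negligible {x \<in> S. h x \<in> {y. b \<bullet> y = 0}}"
  proof (rule negligible_differentiable_vimage[where f'=h'])
    show "negligible {y. b \<bullet> y = 0}"
      using negligible_hyperplane[of b 0] b by (auto simp: nonzero_Basis)
  next
    fix x assume "x \<in> S"
    then have "x \<in> \<Omega>" and gb: "g' x b \<noteq> 0" by (auto simp: S_def)
    have lin: "linear (g' x)"
      using deriv[OF \<open>x \<in> \<Omega>\<close>] has_derivative_linear by blast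
    have "(h has_derivative h' x) (at x)"
      unfolding h_def h'_def using deriv[OF \<open>x \<in> \<Omega>\<close>] by (auto intro!: derivative_eq_intros)
    then show "(h has_derivative h' x) (at x within S)"
      using has_derivative_at_withinI by blast
    have lh: "linear (h' x)"
      using lin unfolding h'_def
      by (intro linearI) (auto simp: linear_add linear_scale algebra_simps inner_add_left)
    show "inj (h' x)"
    proof (rule linear_injective_0[THEN iffD2, OF lh], intro allI impI)
      fix w assume w0: "h' x w = 0"
      then have "(h' x w) \<bullet> b = 0" by simp
      then have gw: "g' x w = 0" by (simp add: h'_def inner_diff_left inner_add_left bb)
      then have weq: "w = (w \<bullet> b) *\<^sub>R b" using w0 by (simp add: h'_def)
      have "g' x w = (w \<bullet> b) * g' x b"
        by (subst weq) (simp add: linear_scale[OF lin])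
      then have "w \<bullet> b = 0" using gw gb by simp
      then show "w = 0" using weq by simp
    qed
  qed
  moreover have "{x \<in> S. h x \<in> {y. b \<bullet> y = 0}} = S"
    by (auto simp: S_def h_def inner_diff_right inner_add_right bb inner_commute)
  ultimately show ?thesis by (simp add: S_def)
qed

lemma negligible_zeros_nonzero_derivative:
  fixes g :: "'a::euclidean_space \<Rightarrow> real"
  assumes deriv: "\<And>x. x \<in> \<Omega> \<Longrightarrow> (g has_derivative g' x) (at x)"
  shows "negligible {x\<in>\<Omega>. g x = 0 \<and> g' x \<noteq> (\<lambda>_. 0)}"
proof -
  have "\<exists>b\<in>Basis. g' x b \<noteq> 0" if "x \<in> \<Omega>" "g' x \<noteq> (\<lambda>_. 0)" for x
    using linear_eq_stdbasis[OF has_derivative_linear[OF deriv[OF that(1)]] linear_zero] that(2)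
    by auto
  then have "{x\<in>\<Omega>. g x = 0 \<and> g' x \<noteq> (\<lambda>_. 0)} \<subseteq>
      (\<Union>b\<in>Basis. {x\<in>\<Omega>. g x = 0 \<and> g' x b \<noteq> 0})"
    by blast
  moreover have "negligible (\<Union>b\<in>Basis. {x\<in>\<Omega>. g x = 0 \<and> g' x b \<noteq> 0})"
    using negligible_zeros_nonzero_partial_derivative[OF deriv] by (intro negligible_Union) auto
  ultimately show ?thesis using negligible_subset by blast
qed

lemma ntimes_differentiable_on_linear_compose:
  assumes "bounded_linear l" "ntimes_differentiable_on m f S"
  shows "ntimes_differentiable_on m (\<lambda>x. l (f x)) S"
  using assms(2)
proof (induction m arbitrary: f)
  case (Suc m)
  then obtain f' where "\<forall>x\<in>S. (f has_derivative f' x) (at x)"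
    and "\<forall>v. ntimes_differentiable_on m (\<lambda>x. f' x v) S" by auto
  then have "\<forall>x\<in>S. ((\<lambda>x. l (f x)) has_derivative (\<lambda>v. l (f' x v))) (at x)"
    and "\<forall>v. ntimes_differentiable_on m (\<lambda>x. l (f' x v)) S"
    using bounded_linear.has_derivative[OF assms(1)] Suc.IH by blast+
  then show ?case by auto
qed simp

lemma ntimes_differentiable_on_1_iff:
  "ntimes_differentiable_on (Suc 0) f S \<longleftrightarrow> (\<forall>x\<in>S. f differentiable (at x))"
  by (auto simp: differentiable_def intro!: bchoice)

lemma ntimes_differentiable_onE:
  assumes "ntimes_differentiable_on n f S" "\<forall>x\<in>S. f differentiable (at x)"
  obtains m where "ntimes_differentiable_on (Suc m) f S" "n \<le> Suc m"
proof (cases n)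
  case 0
  have "ntimes_differentiable_on (Suc 0) f S"
    using assms(2) ntimes_differentiable_on_1_iff by blast
  then show ?thesis using that[of 0] 0 by simp
next
  case (Suc m)
  then show ?thesis using that[of m] assms(1) by simp
qed

lemma negligible_zeros_not_vanishing_to_order:
  fixes g :: "'a::euclidean_space \<Rightarrow> real"
  assumes "open \<Omega>" "ntimes_differentiable_on (Suc m) g \<Omega>"
  shows "negligible {s\<in>\<Omega>. g s = 0 \<and> \<not> vanishes_to_order g s (Suc m)}"
  using assms(2)
proof (induction m arbitrary: g)
  case 0
  then obtain g' where deriv: "\<And>x. x \<in> \<Omega> \<Longrightarrow> (g has_derivative g' x) (at x)" by auto
  have "{s\<in>\<Omega>. g s = 0 \<and> \<not> vanishes_to_order g s 1} \<subseteq> {x\<in>\<Omega>. g x = 0 \<and> g' x \<noteq> (\<lambda>_. 0)}"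
    using deriv by (force simp: vanishes_to_order_1_iff[unfolded One_nat_def])
  then show ?case
    using negligible_zeros_nonzero_derivative[OF deriv] negligible_subset by auto
next
  case (Suc m)
  then obtain g' where deriv: "\<And>x. x \<in> \<Omega> \<Longrightarrow> (g has_derivative g' x) (at x)"
    and partials: "\<And>b. ntimes_differentiable_on (Suc m) (\<lambda>x. g' x b) \<Omega>" by auto
  define N where "N b = {s\<in>\<Omega>. g' s b = 0 \<and> \<not> vanishes_to_order (\<lambda>x. g' x b) s (Suc m)}" for b
  have "vanishes_to_order g s (Suc (Suc m))"
    if "s \<in> \<Omega>" "g s = 0" "g' s = (\<lambda>_. 0)" "s \<notin> (\<Union>b\<in>Basis. N b)" for s
  proof (rule vanishes_to_order_Suc[of g s])
    show "g s = 0" by fact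
    show "\<forall>\<^sub>F x in nhds s. (g has_derivative g' x) (at x)"
      using eventually_nhds_in_open[OF assms(1) \<open>s \<in> \<Omega>\<close>] by (rule eventually_mono) (rule deriv)
    show "vanishes_to_order (\<lambda>x. g' x b) s (Suc m)" if "b \<in> Basis" for b
      using that \<open>s \<in> \<Omega>\<close> \<open>g' s = (\<lambda>_. 0)\<close> \<open>s \<notin> (\<Union>b\<in>Basis. N b)\<close> by (auto simp: N_def)
  qed
  then have "{s\<in>\<Omega>. g s = 0 \<and> \<not> vanishes_to_order g s (Suc (Suc m))} \<subseteq>
      {x\<in>\<Omega>. g x = 0 \<and> g' x \<noteq> (\<lambda>_. 0)} \<union> (\<Union>b\<in>Basis. N b)"
    by blast
  moreover have "negligible ({x\<in>\<Omega>. g x = 0 \<and> g' x \<noteq> (\<lambda>_. 0)} \<union> (\<Union>b\<in>Basis. N b))"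
    using negligible_zeros_nonzero_derivative[OF deriv] Suc.IH[OF partials]
    by (auto simp: N_def)
  ultimately show ?case using negligible_subset by blast
qed

section \<open>Chains of derivatives on the line\<close>

definition derivative_chain ::
    "(nat \<Rightarrow> real \<Rightarrow> 'a::real_normed_vector) \<Rightarrow> nat \<Rightarrow> real \<Rightarrow> real \<Rightarrow> bool" where
  "derivative_chain D k a e \<longleftrightarrow>
     (\<forall>j t. Suc j < k \<and> t \<in> ball a e \<and> (Suc j < k - 1 \<or> t = a) \<longrightarrow>
            (D j has_vector_derivative D (Suc j) t) (at t))"

lemma derivative_chain_mono:
  "derivative_chain D k a e \<Longrightarrow> k' \<le> k \<Longrightarrow> derivative_chain D k' a e"
  unfolding derivative_chain_def by (metis diff_le_mono less_le_trans order.strict_trans2)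

lemma derivative_chain_shift:
  assumes "derivative_chain D (Suc k) a e"
  shows "derivative_chain (\<lambda>j. D (Suc j)) k a e"
  unfolding derivative_chain_def
proof (intro allI impI)
  fix j t assume "Suc j < k \<and> t \<in> ball a e \<and> (Suc j < k - 1 \<or> t = a)"
  then show "(D (Suc j) has_vector_derivative D (Suc (Suc j)) t) (at t)"
    using assms[unfolded derivative_chain_def, rule_format, of "Suc j" t] by (auto simp: less_diff_conv)
qed

lemma derivative_chain_linear_image:
  "derivative_chain D k a e \<Longrightarrow> bounded_linear l \<Longrightarrow> derivative_chain (\<lambda>j t. l (D j t)) k a e"
  unfolding derivative_chain_def using bounded_linear.has_vector_derivative by blast

lemma derivative_chain_real_iff:
  fixes H :: "nat \<Rightarrow> real \<Rightarrow> real"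
  shows "derivative_chain H k a e \<longleftrightarrow>
     (\<forall>j t. Suc j < k \<and> t \<in> ball a e \<and> (Suc j < k - 1 \<or> t = a) \<longrightarrow>
            (H j has_real_derivative H (Suc j) t) (at t))"
  by (simp add: derivative_chain_def has_real_derivative_iff_has_vector_derivative)

lemma has_real_derivative_monomial_fact:
  "((\<lambda>r. c * r ^ Suc n / fact (Suc n)) has_real_derivative c * x ^ n / fact n) (at x)"
proof -
  have "((\<lambda>r. c * r ^ Suc n / fact (Suc n)) has_real_derivative
          c * (of_nat (Suc n) * x ^ n) / fact (Suc n)) (at x)"
    using DERIV_cdivide[OF DERIV_cmult[OF DERIV_pow[of "Suc n"]], of c "fact (Suc n)" x] by simp
  then show ?thesis by (simp add: fact_Suc del: of_nat_Suc)
qed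

text \<open>A Peano form of Taylor's theorem: only the top derivative is assumed to exist
  at a single point, the lower ones near it.\<close>
lemma derivative_chain_taylor:
  fixes H :: "nat \<Rightarrow> real \<Rightarrow> real"
  assumes "derivative_chain H (Suc (Suc m)) 0 e" "e > 0" "\<forall>j\<le>m. H j 0 = 0"
  shows "vanishes_to_order (\<lambda>r. H 0 r - H (Suc m) 0 * r ^ Suc m / fact (Suc m)) 0 (Suc m)"
  using assms(1,3)
proof (induction m arbitrary: H)
  case 0
  then have "(H 0 has_real_derivative H 1 0) (at 0)"
    using \<open>e > 0\<close> by (simp add: derivative_chain_real_iff)
  then have "((\<lambda>r. H 0 r - H 1 0 * r) has_real_derivative 0) (at 0)"
    by (auto intro!: derivative_eq_intros)
  moreover have "(*) (0::real) = (\<lambda>_. 0)" by auto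
  ultimately show ?case
    using "0.prems"(2)
    by (simp add: vanishes_to_order_1_iff[unfolded One_nat_def] has_field_derivative_def)
next
  case (Suc m)
  let ?c = "H (Suc (Suc m)) 0"
  have flat: "vanishes_to_order (\<lambda>r. H 1 r - ?c * r ^ Suc m / fact (Suc m)) 0 (Suc m)"
    using Suc.IH[of "\<lambda>j. H (Suc j)"] derivative_chain_shift[OF Suc.prems(1)] Suc.prems(2)
    by simp
  have deriv: "\<forall>\<^sub>F x in nhds 0. ((\<lambda>r. H 0 r - ?c * r ^ Suc (Suc m) / fact (Suc (Suc m)))
      has_real_derivative H 1 x - ?c * x ^ Suc m / fact (Suc m)) (at x)"
  proof -
    have "(H 0 has_real_derivative H 1 x) (at x)" if "x \<in> ball 0 e" for x
      using Suc.prems(1) that by (simp add: derivative_chain_real_iff)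
    then have "((\<lambda>r. H 0 r - ?c * r ^ Suc (Suc m) / fact (Suc (Suc m)))
      has_real_derivative H 1 x - ?c * x ^ Suc m / fact (Suc m)) (at x)" if "x \<in> ball 0 e" for x
      using that by (intro DERIV_diff has_real_derivative_monomial_fact)
    then show ?thesis
      using eventually_nhds_in_open[of "ball 0 e" 0] \<open>e > 0\<close> by (auto elim!: eventually_mono)
  qed
  show ?case
    by (rule vanishes_to_order_Suc_real[OF _ deriv flat]) (use Suc.prems(2) in simp)
qed

lemma derivative_chain_top_zero_if_flat:
  fixes H :: "nat \<Rightarrow> real \<Rightarrow> real"
  assumes "derivative_chain H (Suc m) 0 e" "e > 0" "\<forall>j<m. H j 0 = 0"
    and "vanishes_to_order (H 0) 0 m"
  shows "H m 0 = 0"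
proof (cases m)
  case 0
  then show ?thesis using vanishes_to_order_imp_zero[OF assms(4)] by simp
next
  case (Suc n)
  let ?c = "H m 0"
  have "vanishes_to_order (\<lambda>r. H 0 r - ?c * r ^ m / fact m) 0 m"
    using derivative_chain_taylor[of H n e] assms(1-3) Suc by simp
  then have "vanishes_to_order (\<lambda>r. H 0 r - (H 0 r - ?c * r ^ m / fact m)) 0 m"
    by (rule vanishes_to_order_diff[OF assms(4)])
  then have "vanishes_to_order (\<lambda>r. (?c / fact m) * r ^ m) 0 m"
    by simp
  then show ?thesis using vanishes_to_order_monomial by fastforce
qed

lemma derivative_chain_zero_if_flat:
  fixes H :: "nat \<Rightarrow> real \<Rightarrow> real"
  assumes "derivative_chain H k 0 e" "e > 0" "vanishes_to_order (H 0) 0 p" "k \<le> Suc p"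
    and "j < k"
  shows "H j 0 = 0"
  using assms(5)
proof (induction j rule: less_induct)
  case (less j)
  show ?case
  proof (rule derivative_chain_top_zero_if_flat[OF _ \<open>e > 0\<close>])
    show "derivative_chain H (Suc j) 0 e"
      using derivative_chain_mono[OF assms(1)] less.prems by simp
    show "vanishes_to_order (H 0) 0 j"
      using vanishes_to_order_mono[OF assms(3)] less.prems assms(4) by simp
  qed (use less in auto)
qed

lemma has_real_derivative_zero_if_frequently_zero:
  assumes "(f has_real_derivative f') (at a)" "f a = 0" "\<exists>\<^sub>F x in at a. f x = 0"
  shows "f' = 0"
proof -
  have "((\<lambda>y. (f y - f a) / (y - a)) \<longlongrightarrow> f') (at a)"
    using assms(1) by (simp add: has_field_derivative_iff)
  moreover have "\<exists>\<^sub>F y in at a. (f y - f a) / (y - a) = 0"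
    using assms(3) by (rule frequently_elim1) (simp add: assms(2))
  ultimately show ?thesis
    by (intro limit_frequently_eq[OF at_neq_bot, of "\<lambda>y. (f y - f a) / (y - a)"])
qed

lemma frequently_zero_derivative:
  fixes f :: "real \<Rightarrow> real"
  assumes deriv: "\<And>x. x \<in> ball a e \<Longrightarrow> (f has_real_derivative f' x) (at x)" and "e > 0"
    and "f a = 0" "\<exists>\<^sub>F x in at a. f x = 0"
  shows "\<exists>\<^sub>F x in at a. f' x = 0"
  unfolding frequently_at
proof (intro allI impI)
  fix d :: real assume "d > 0"
  then obtain x where "x \<noteq> a" "dist x a < min d e" "f x = 0"
    using assms(4) \<open>e > 0\<close> unfolding frequently_at by (meson min_less_iff_conj)
  define lo hi where "lo = min a x" and "hi = max a x"
  have sub: "{lo..hi} \<subseteq> ball a e"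
    using \<open>dist x a < min d e\<close> by (auto simp: lo_def hi_def dist_real_def)
  have "lo < hi" "f lo = f hi"
    using \<open>x \<noteq> a\<close> \<open>f a = 0\<close> \<open>f x = 0\<close> by (auto simp: lo_def hi_def)
  moreover have "continuous_on {lo..hi} f"
    using sub by (intro continuous_at_imp_continuous_on ballI DERIV_isCont[OF deriv]) force
  moreover have "f differentiable (at y)" if "lo < y" "y < hi" for y
  proof -
    have "y \<in> ball a e" using sub that by (meson atLeastAtMost_iff less_imp_le subsetD)
    then show ?thesis using deriv real_differentiable_def by blast
  qed
  ultimately obtain z where z: "lo < z" "z < hi" "(f has_real_derivative 0) (at z)"
    using Rolle by blast
  moreover have "z \<in> ball a e" using sub z by (meson atLeastAtMost_iff less_imp_le subsetD)
  ultimately have "f' z = 0"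
    using DERIV_unique[OF deriv] by blast
  moreover have "z \<noteq> a" "dist z a < d"
    using z \<open>dist x a < min d e\<close> by (auto simp: lo_def hi_def dist_real_def)
  ultimately show "\<exists>z\<in>UNIV. z \<noteq> a \<and> dist z a < d \<and> f' z = 0" by blast
qed

lemma derivative_chain_zero_if_frequently_zero:
  fixes H :: "nat \<Rightarrow> real \<Rightarrow> real"
  assumes "derivative_chain H k a e" "e > 0" "H 0 a = 0" "\<exists>\<^sub>F x in at a. H 0 x = 0"
    and "j < k"
  shows "H j a = 0"
proof -
  have "H j a = 0 \<and> (Suc j < k \<longrightarrow> (\<exists>\<^sub>F x in at a. H j x = 0))" if "j < k" for j
    using that
  proof (induction j)
    case 0
    then show ?case using assms(3,4) by simp
  next
    case (Suc j)
    then have IH: "H j a = 0" "\<exists>\<^sub>F x in at a. H j x = 0" by auto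
    have "(H j has_real_derivative H (Suc j) a) (at a)"
      using assms(1,2) Suc.prems by (simp add: derivative_chain_real_iff)
    moreover have "(H j has_real_derivative H (Suc j) x) (at x)"
      if "Suc (Suc j) < k" "x \<in> ball a e" for x
      using assms(1) that by (simp add: derivative_chain_real_iff less_diff_conv)
    ultimately show ?case
      using IH assms(2) has_real_derivative_zero_if_frequently_zero[of "H j"]
        frequently_zero_derivative[of a e "H j" "H (Suc j)"]
      by blast
  qed
  then show ?thesis using assms(5) by blast
qed

section \<open>Linear functionals along nondegenerate curves\<close>

lemma curve_nondegenerate_at_linear_functionalE:
  fixes \<rho> :: "real \<Rightarrow> 'b::euclidean_space" and l :: "'b \<Rightarrow> real"
  assumes "curve_nondegenerate_at \<rho> t0 V" "linear l"
  obtains e H where "e > 0" "\<forall>\<^sub>F t in nhds t0. H 0 t = l (\<rho> t)" "derivative_chain H (dim V) t0 e"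
    "(\<forall>j<dim V. H j t0 = 0) \<longrightarrow> (\<forall>x\<in>V. l x = 0)"
proof -
  obtain D e where "e > 0" and D0: "\<forall>t\<in>ball t0 e. D 0 t = \<rho> t"
    and chain: "derivative_chain D (dim V) t0 e" and span: "span {D j t0 | j. j < dim V} = V"
    using assms(1) unfolding curve_nondegenerate_at_def derivative_chain_def Let_def by blast
  show ?thesis
  proof (rule that[OF \<open>e > 0\<close>])
    show "\<forall>\<^sub>F t in nhds t0. l (D 0 t) = l (\<rho> t)"
      using eventually_nhds_ball[OF \<open>e > 0\<close>, of t0] D0 by (auto elim: eventually_mono)
    show "derivative_chain (\<lambda>j t. l (D j t)) (dim V) t0 e"
      using chain assms(2) by (simp add: derivative_chain_linear_image linear_conv_bounded_linear)
    show "(\<forall>j<dim V. l (D j t0) = 0) \<longrightarrow> (\<forall>x\<in>V. l x = 0)"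
      using linear_eq_0_on_span[OF assms(2), of "{D j t0 | j. j < dim V}"] span by auto
  qed
qed

lemma curve_nondegenerate_zero_if_flat:
  fixes \<rho> :: "real \<Rightarrow> 'b::euclidean_space" and l :: "'b \<Rightarrow> real"
  assumes "curve_nondegenerate_at \<rho> 0 V" "linear l" "vanishes_to_order (\<lambda>r. l (\<rho> r)) 0 p"
    and "dim V \<le> Suc p" "x \<in> V"
  shows "l x = 0"
proof -
  obtain e H where "e > 0" and H0: "\<forall>\<^sub>F t in nhds 0. H 0 t = l (\<rho> t)"
    and chain: "derivative_chain H (dim V) 0 e"
    and span: "(\<forall>j<dim V. H j 0 = 0) \<longrightarrow> (\<forall>x\<in>V. l x = 0)"
    by (rule curve_nondegenerate_at_linear_functionalE[OF assms(1,2)])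
  have "vanishes_to_order (H 0) 0 p"
    using H0 by (intro vanishes_to_order_cong[OF _ assms(3)]) (auto elim: eventually_mono)
  then have "H j 0 = 0" if "j < dim V" for j
    by (rule derivative_chain_zero_if_flat[OF chain \<open>e > 0\<close> _ assms(4) that])
  then show ?thesis using span assms(5) by blast
qed

lemma curve_nondegenerate_zero_if_frequently_zero:
  fixes \<rho> :: "real \<Rightarrow> 'b::euclidean_space" and l :: "'b \<Rightarrow> real"
  assumes "curve_nondegenerate_at \<rho> 0 V" "linear l" "l (\<rho> 0) = 0"
    and "\<exists>\<^sub>F r in at 0. l (\<rho> r) = 0" "x \<in> V"
  shows "l x = 0"
proof -
  obtain e H where "e > 0" and H0: "\<forall>\<^sub>F t in nhds 0. H 0 t = l (\<rho> t)"
    and chain: "derivative_chain H (dim V) 0 e"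
    and span: "(\<forall>j<dim V. H j 0 = 0) \<longrightarrow> (\<forall>x\<in>V. l x = 0)"
    by (rule curve_nondegenerate_at_linear_functionalE[OF assms(1,2)])
  have "H 0 0 = 0"
    using eventually_nhds_x_imp_x[OF H0] assms(3) by simp
  moreover have "\<exists>\<^sub>F r in at 0. H 0 r = 0"
  proof (rule frequently_rev_mp[OF assms(4)])
    show "\<forall>\<^sub>F r in at 0. l (\<rho> r) = 0 \<longrightarrow> H 0 r = 0"
      using H0 unfolding eventually_at_filter by (auto elim: eventually_mono)
  qed
  ultimately have "H j 0 = 0" if "j < dim V" for j
    by (rule derivative_chain_zero_if_frequently_zero[OF chain \<open>e > 0\<close> _ _ that])
  then show ?thesis using span assms(5) by blast
qed

section \<open>Nondegenerate points\<close>

lemma linear_projection_along_complement: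
  fixes T :: "'a::real_vector \<Rightarrow> 'b::real_vector"
  assumes lin: "linear T" and inj: "inj T" and L: "subspace L"
    and cap: "range T \<inter> L = {0}" and sum: "{x + y | x y. x \<in> range T \<and> y \<in> L} = UNIV"
  obtains Q where "linear Q" "\<And>w. Q (T w) = w" "\<And>y. y \<in> L \<Longrightarrow> Q y = 0" "\<And>x. x - T (Q x) \<in> L"
proof -
  have ex: "\<exists>w. x - T w \<in> L" for x
  proof -
    have "x \<in> {x + y | x y. x \<in> range T \<and> y \<in> L}" using sum by simp
    then obtain w y where "x = T w + y" "y \<in> L" by auto
    then show ?thesis by (intro exI[of _ w]) simp
  qed
  have uniq: "w = w'" if "x - T w \<in> L" "x - T w' \<in> L" for x w w'
  proof -
    have "(x - T w') - (x - T w) \<in> L" using that L subspace_diff by blast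
    then have "T (w - w') \<in> L" by (simp add: linear_diff[OF lin])
    then have "T (w - w') = 0" using cap by blast
    then show ?thesis using inj by (simp add: linear_diff[OF lin] inj_eq)
  qed
  define Q where "Q x = (THE w. x - T w \<in> L)" for x
  have Q: "x - T (Q x) \<in> L" for x
    unfolding Q_def using ex[of x] uniq by (metis theI)
  have Qeq: "Q x = w" if "x - T w \<in> L" for x w
    using uniq[OF Q that] .
  have "linear Q"
  proof (rule linearI)
    fix x y
    have "(x + y) - T (Q x + Q y) = (x - T (Q x)) + (y - T (Q y))"
      by (simp add: linear_add[OF lin])
    also have "\<dots> \<in> L" using Q L by (simp add: subspace_add)
    finally show "Q (x + y) = Q x + Q y" by (rule Qeq)
  next
    fix c :: real and x
    have "c *\<^sub>R x - T (c *\<^sub>R Q x) = c *\<^sub>R (x - T (Q x))"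
      by (simp add: linear_scale[OF lin] scaleR_diff_right)
    also have "\<dots> \<in> L" using Q L by (simp add: subspace_scale)
    finally show "Q (c *\<^sub>R x) = c *\<^sub>R Q x" by (rule Qeq)
  qed
  moreover have "Q (T w) = w" for w using L by (auto intro!: Qeq simp: subspace_0)
  moreover have "Q y = 0" if "y \<in> L" for y using L that by (auto intro!: Qeq simp: linear_0[OF lin])
  ultimately show ?thesis using that Q by blast
qed

lemma DIM_1_scaleR_multiple:
  fixes u w :: "'a::euclidean_space"
  assumes "DIM('a) = 1" "u \<noteq> 0"
  obtains c where "w = c *\<^sub>R u"
proof -
  have "span {u} = UNIV"
    using dim_eq_full[of "{u}"] assms by simp
  then show ?thesis using that span_singleton[of u] by auto
qed

lemma has_derivative_id_norm_bound:
  assumes "(F has_derivative id) (at s)"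
  shows "\<forall>\<^sub>F t in nhds s. norm (t - s) \<le> 2 * norm (F t - F s)"
proof -
  obtain d where "d > 0" and d: "\<And>t. norm (t - s) < d \<Longrightarrow> norm (F t - F s - (t - s)) \<le> norm (t - s) / 2"
    using assms unfolding has_derivative_at_alt
    by (metis half_gt_zero_iff id_apply mult.commute mult_1 zero_less_one divide_inverse)
  have "norm (t - s) \<le> 2 * norm (F t - F s)" if "norm (t - s) < d" for t
    using d[OF that] norm_triangle_ineq3[of "t - s" "F t - F s"] by (simp add: norm_minus_commute)
  then show ?thesis
    unfolding eventually_nhds_metric dist_norm using \<open>d > 0\<close> by blast
qed

text \<open>The witnesses of nondegenerate_at at s; continuity on \<Omega>1 is what the open mapping
  theorem needs.\<close>
locale nondegenerate_point =
  fixes \<phi> :: "'a::euclidean_space \<Rightarrow> 'b::euclidean_space" and s :: 'a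
    and \<phi>' :: "'a \<Rightarrow> 'b" and L :: "'b set" and v :: 'b and \<Omega>1 :: "'a set" and r0 :: real
    and \<rho> :: "real \<Rightarrow> 'b"
  assumes has_derivative: "(\<phi> has_derivative \<phi>') (at s)" and inj: "inj \<phi>'"
    and subspace: "subspace L" and in_L: "\<phi> s \<in> L" and complement: "range \<phi>' \<inter> L = {0}"
    and sum_eq_UNIV: "{x + y | x y. x \<in> range \<phi>' \<and> y \<in> L} = UNIV"
    and v: "v \<in> range \<phi>'" "v \<noteq> 0"
    and in_interior: "s \<in> interior \<Omega>1" and continuous_on_\<Omega>1: "continuous_on \<Omega>1 \<phi>"
    and r0: "r0 > 0" and slice: "\<And>r. \<bar>r\<bar> < r0 \<Longrightarrow> \<phi> ` \<Omega>1 \<inter> {r *\<^sub>R v + y | y. y \<in> L} = {\<rho> r}"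
    and curve: "curve_nondegenerate_at \<rho> 0 (span (insert v L))"

lemma nondegenerate_atE:
  assumes "nondegenerate_at \<phi> \<Omega> s" "continuous_on \<Omega> \<phi>"
  obtains \<phi>' L v \<Omega>1 r0 \<rho> where "nondegenerate_point \<phi> s \<phi>' L v \<Omega>1 r0 \<rho>"
proof -
  obtain \<phi>' L v \<Omega>1 r0 \<rho> where "(\<phi> has_derivative \<phi>') (at s)" "inj \<phi>'"
    "subspace L" "\<phi> s \<in> L" "range \<phi>' \<inter> L = {0}" "{x + y | x y. x \<in> range \<phi>' \<and> y \<in> L} = UNIV"
    "v \<in> range \<phi>'" "v \<noteq> 0" "\<Omega>1 \<subseteq> \<Omega>" "s \<in> interior \<Omega>1" "r0 > 0"
    "\<And>r. \<bar>r\<bar> < r0 \<Longrightarrow> \<phi> ` \<Omega>1 \<inter> {r *\<^sub>R v + y | y. y \<in> L} = {\<rho> r}"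
    "curve_nondegenerate_at \<rho> 0 (span (insert v L))"
    using assms(1) unfolding nondegenerate_at_def by blast
  moreover from \<open>\<Omega>1 \<subseteq> \<Omega>\<close> have "continuous_on \<Omega>1 \<phi>"
    using assms(2) continuous_on_subset by blast
  ultimately show ?thesis
    using that unfolding nondegenerate_point_def by blast
qed

context nondegenerate_point
begin

lemma linear_derivative: "linear \<phi>'"
  using has_derivative has_derivative_linear by blast

text \<open>F is phi followed by the projection onto the parameter space along L.\<close>
lemma chart:
  obtains F u where "continuous_on \<Omega>1 F" "(F has_derivative id) (at s)" "F s = 0" "u \<noteq> 0"
    "\<And>t r. t \<in> \<Omega>1 \<Longrightarrow> F t = r *\<^sub>R u \<Longrightarrow> \<bar>r\<bar> < r0 \<Longrightarrow> \<phi> t = \<rho> r"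
proof -
  obtain Q where Q: "linear Q" "\<And>w. Q (\<phi>' w) = w" "\<And>y. y \<in> L \<Longrightarrow> Q y = 0"
    "\<And>x. x - \<phi>' (Q x) \<in> L"
    using linear_projection_along_complement[OF linear_derivative inj subspace complement sum_eq_UNIV]
    by blast
  obtain u where u: "v = \<phi>' u" using v(1) by blast
  define F where "F t = Q (\<phi> t)" for t
  have "continuous_on \<Omega>1 F"
    unfolding F_def using continuous_on_\<Omega>1 Q(1) by (rule linear_continuous_on_compose)
  moreover have "(F has_derivative (\<lambda>w. Q (\<phi>' w))) (at s)"
    unfolding F_def
    using bounded_linear.has_derivative[OF linear_conv_bounded_linear[THEN iffD1, OF Q(1)] has_derivative] .
  then have "(F has_derivative id) (at s)"
    by (simp add: Q(2) id_def)
  moreover have "F s = 0" using Q(3) in_L by (simp add: F_def)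
  moreover have "u \<noteq> 0" using v(2) u linear_0[OF linear_derivative] by auto
  moreover have "\<phi> t = \<rho> r" if "t \<in> \<Omega>1" "F t = r *\<^sub>R u" "\<bar>r\<bar> < r0" for t r
  proof -
    have "\<phi>' (Q (\<phi> t)) = r *\<^sub>R v"
      using that(2) by (simp add: F_def u linear_scale[OF linear_derivative])
    then have "\<phi> t = r *\<^sub>R v + (\<phi> t - \<phi>' (Q (\<phi> t)))" by simp
    then have "\<phi> t \<in> \<phi> ` \<Omega>1 \<inter> {r *\<^sub>R v + y | y. y \<in> L}" using Q(4) that(1) by blast
    then show ?thesis using slice[OF that(3)] by blast
  qed
  ultimately show ?thesis using that by blast
qed

lemma curve_at_0: "\<rho> 0 = \<phi> s"
proof -
  have "s \<in> \<Omega>1" using in_interior interior_subset by blast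
  then have "\<phi> s \<in> \<phi> ` \<Omega>1 \<inter> {0 *\<^sub>R v + y | y. y \<in> L}" using in_L by auto
  also have "\<dots> = {\<rho> 0}" by (rule slice) (use r0 in simp)
  finally show ?thesis by simp
qed

text \<open>By the open mapping theorem every small r u is a value F t, and |t - s| \<le> 2 |F t|
  because F has derivative id at s.\<close>
lemma curve_reached_nearby:
  obtains C \<delta> where "C > 0" "\<delta> > 0" "\<And>r. \<bar>r\<bar> < \<delta> \<Longrightarrow> \<exists>t. norm (t - s) \<le> C * \<bar>r\<bar> \<and> \<phi> t = \<rho> r"
proof -
  obtain F u where contF: "continuous_on \<Omega>1 F" and dF: "(F has_derivative id) (at s)"
    and "F s = 0" "u \<noteq> 0"
    and on_curve: "\<And>t r. t \<in> \<Omega>1 \<Longrightarrow> F t = r *\<^sub>R u \<Longrightarrow> \<bar>r\<bar> < r0 \<Longrightarrow> \<phi> t = \<rho> r"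
    using chart by blast
  have "\<forall>\<^sub>F t in nhds s. t \<in> interior \<Omega>1 \<and> norm (t - s) \<le> 2 * norm (F t)"
    using eventually_nhds_in_open[OF open_interior in_interior] has_derivative_id_norm_bound[OF dF]
    by (simp add: \<open>F s = 0\<close> eventually_conj)
  then obtain \<delta> where "\<delta> > 0"
    and \<delta>: "\<And>t. t \<in> ball s \<delta> \<Longrightarrow> t \<in> interior \<Omega>1 \<and> norm (t - s) \<le> 2 * norm (F t)"
    unfolding eventually_nhds_metric by (auto simp: dist_commute)
  have "F s \<in> interior (F ` ball s \<delta>)"
    by (rule sussmann_open_mapping[of "interior \<Omega>1" F s id id])
       (use contF interior_subset \<delta> \<open>\<delta> > 0\<close> in_interior dF in
         \<open>auto intro: continuous_on_subset simp: id_def\<close>)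
  then have "0 \<in> interior (F ` ball s \<delta>)"
    using \<open>F s = 0\<close> by simp
  then obtain \<eta> where "\<eta> > 0" and \<eta>: "ball 0 \<eta> \<subseteq> F ` ball s \<delta>"
    using mem_interior by blast
  define C where "C = 2 * norm u"
  have "\<exists>t. norm (t - s) \<le> C * \<bar>r\<bar> \<and> \<phi> t = \<rho> r" if r: "\<bar>r\<bar> < min r0 (\<eta> / norm u)" for r
  proof -
    have "norm (r *\<^sub>R u) < \<eta>"
      using r \<open>u \<noteq> 0\<close> by (simp add: pos_less_divide_eq)
    then have "r *\<^sub>R u \<in> F ` ball s \<delta>"
      using \<eta> by (auto simp: dist_norm)
    then obtain t where t: "t \<in> ball s \<delta>" "F t = r *\<^sub>R u" by (metis imageE)
    have "t \<in> \<Omega>1" using \<delta>[OF t(1)] interior_subset by blast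
    then have "\<phi> t = \<rho> r"
      using on_curve t(2) r by simp
    moreover have "norm (t - s) \<le> C * \<bar>r\<bar>" using \<delta>[OF t(1)] t(2) by (simp add: C_def mult_ac)
    ultimately show ?thesis by blast
  qed
  moreover have "C > 0" "min r0 (\<eta> / norm u) > 0"
    using \<open>u \<noteq> 0\<close> r0 \<open>\<eta> > 0\<close> by (auto simp: C_def)
  ultimately show ?thesis using that by blast
qed

lemma decompose:
  obtains w y where "x = \<phi>' w + y" "y \<in> L"
proof -
  have "x \<in> {x + y | x y. x \<in> range \<phi>' \<and> y \<in> L}" using sum_eq_UNIV by simp
  then show ?thesis using that by blast
qed

lemma linear_eq_0_if_zero_on_tangent_and_L:
  assumes "linear l" "\<And>w. l (\<phi>' w) = 0" "\<And>y. y \<in> L \<Longrightarrow> l y = 0"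
  shows "l x = 0"
proof -
  obtain w y where "x = \<phi>' w + y" "y \<in> L" by (rule decompose)
  then show ?thesis using assms by (simp add: linear_add)
qed

lemma span_eq_UNIV_if_DIM_1:
  assumes "DIM('a) = 1"
  shows "span (insert v L) = UNIV"
proof -
  obtain u where u: "v = \<phi>' u" using v(1) by blast
  have "u \<noteq> 0" using v(2) u linear_0[OF linear_derivative] by auto
  have "x \<in> span (insert v L)" for x
  proof -
    obtain w y where x: "x = \<phi>' w + y" "y \<in> L" by (rule decompose)
    obtain c where "w = c *\<^sub>R u" using DIM_1_scaleR_multiple[OF assms \<open>u \<noteq> 0\<close>] .
    then have "\<phi>' w = c *\<^sub>R v" by (simp add: u linear_scale[OF linear_derivative])
    then show ?thesis
      using x by (simp add: span_add span_base span_scale)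
  qed
  then show ?thesis by auto
qed

lemma vanishes_to_order_along_curve:
  assumes "vanishes_to_order (\<lambda>t. g (\<phi> t)) s p"
  shows "vanishes_to_order (\<lambda>r. g (\<rho> r)) 0 p"
  unfolding vanishes_to_order_def
proof (intro allI impI)
  fix \<epsilon> :: real assume "\<epsilon> > 0"
  obtain C \<delta> where "C > 0" "\<delta> > 0"
    and reach: "\<And>r. \<bar>r\<bar> < \<delta> \<Longrightarrow> \<exists>t. norm (t - s) \<le> C * \<bar>r\<bar> \<and> \<phi> t = \<rho> r"
    using curve_reached_nearby by blast
  define \<epsilon>' where "\<epsilon>' = \<epsilon> / C ^ p"
  have "\<epsilon>' > 0" using \<open>\<epsilon> > 0\<close> \<open>C > 0\<close> by (simp add: \<epsilon>'_def)
  then obtain d where "d > 0" and d: "\<And>t. norm (t - s) < d \<Longrightarrow> \<bar>g (\<phi> t)\<bar> \<le> \<epsilon>' * norm (t - s) ^ p"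
    using assms unfolding vanishes_to_order_def eventually_nhds_metric dist_norm by blast
  have "\<bar>g (\<rho> r)\<bar> \<le> \<epsilon> * \<bar>r\<bar> ^ p" if r: "\<bar>r\<bar> < min \<delta> (d / C)" for r
  proof -
    obtain t where t: "norm (t - s) \<le> C * \<bar>r\<bar>" "\<phi> t = \<rho> r" using reach r by auto
    have "C * \<bar>r\<bar> < d" using r \<open>C > 0\<close> by (simp add: less_divide_eq mult.commute)
    then have "\<bar>g (\<phi> t)\<bar> \<le> \<epsilon>' * norm (t - s) ^ p" using d t(1) by simp
    then have "\<bar>g (\<rho> r)\<bar> \<le> \<epsilon>' * norm (t - s) ^ p" using t(2) by simp
    also have "\<dots> \<le> \<epsilon>' * (C * \<bar>r\<bar>) ^ p"
      using t \<open>\<epsilon>' > 0\<close> by (intro mult_left_mono power_mono) auto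
    also have "\<dots> = \<epsilon> * \<bar>r\<bar> ^ p"
      using \<open>C > 0\<close> by (simp add: \<epsilon>'_def power_mult_distrib)
    finally show ?thesis .
  qed
  moreover have "min \<delta> (d / C) > 0" using \<open>\<delta> > 0\<close> \<open>d > 0\<close> \<open>C > 0\<close> by simp
  ultimately show "\<forall>\<^sub>F r in nhds 0. \<bar>g (\<rho> r)\<bar> \<le> \<epsilon> * norm (r - 0) ^ p"
    unfolding eventually_nhds_metric dist_real_def by (metis diff_zero real_norm_def)
qed

lemma not_vanishes_to_order:
  fixes l :: "'b \<Rightarrow> real"
  assumes "linear l" "l \<noteq> (\<lambda>_. 0)" "1 \<le> p" "DIM('b) \<le> Suc p"
  shows "\<not> vanishes_to_order (\<lambda>t. l (\<phi> t)) s p"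
proof
  assume flat: "vanishes_to_order (\<lambda>t. l (\<phi> t)) s p"
  have "l y = 0" if "y \<in> L" for y
  proof (rule curve_nondegenerate_zero_if_flat[OF curve assms(1) vanishes_to_order_along_curve[OF flat]])
    show "dim (span (insert v L)) \<le> Suc p"
      using dim_subset_UNIV[of "span (insert v L)"] assms(4) by simp
    show "y \<in> span (insert v L)" using that by (simp add: span_base)
  qed
  moreover have "l (\<phi>' w) = 0" for w
  proof -
    have "((\<lambda>t. l (\<phi> t)) has_derivative (\<lambda>_. 0)) (at s)"
      using vanishes_to_order_mono[OF flat assms(3)]
      by (simp add: vanishes_to_order_1_iff[unfolded One_nat_def])
    moreover have "((\<lambda>t. l (\<phi> t)) has_derivative (\<lambda>w. l (\<phi>' w))) (at s)"
      using assms(1) has_derivative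
      by (simp add: bounded_linear.has_derivative linear_conv_bounded_linear)
    ultimately show ?thesis using has_derivative_unique by metis
  qed
  ultimately have "l x = 0" for x using linear_eq_0_if_zero_on_tangent_and_L assms(1) by blast
  then show False using assms(2) by auto
qed

text \<open>In dimension one every point near s lies on the curve, at a nonzero parameter.\<close>
lemma frequently_on_curve:
  assumes "DIM('a) = 1" "\<exists>\<^sub>F t in at s. P (\<phi> t)"
  shows "\<exists>\<^sub>F r in at 0. P (\<rho> r)"
  unfolding frequently_at
proof (intro allI impI)
  fix d :: real assume "d > 0"
  obtain F u where contF: "continuous_on \<Omega>1 F" and dF: "(F has_derivative id) (at s)"
    and "F s = 0" "u \<noteq> 0"
    and on_curve: "\<And>t r. t \<in> \<Omega>1 \<Longrightarrow> F t = r *\<^sub>R u \<Longrightarrow> \<bar>r\<bar> < r0 \<Longrightarrow> \<phi> t = \<rho> r"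
    using chart by blast
  have "((\<lambda>t. norm (F t)) \<longlongrightarrow> 0) (at s)"
    using has_derivative_continuous[OF dF] \<open>F s = 0\<close> tendsto_norm_zero by (simp add: isCont_def)
  then have "\<forall>\<^sub>F t in at s. norm (F t) < min d r0 * norm u"
    using \<open>d > 0\<close> r0 \<open>u \<noteq> 0\<close> by (intro order_tendstoD) auto
  moreover have "\<forall>\<^sub>F t in nhds s. t \<in> interior \<Omega>1 \<and> norm (t - s) \<le> 2 * norm (F t)"
    using eventually_nhds_in_open[OF open_interior in_interior] has_derivative_id_norm_bound[OF dF]
    by (simp add: \<open>F s = 0\<close> eventually_conj)
  then have "\<forall>\<^sub>F t in at s. t \<noteq> s \<and> t \<in> \<Omega>1 \<and> norm (t - s) \<le> 2 * norm (F t)"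
    unfolding eventually_at_filter using interior_subset by (auto elim!: eventually_mono)
  ultimately have "\<forall>\<^sub>F t in at s. t \<noteq> s \<and> t \<in> \<Omega>1 \<and>
      norm (t - s) \<le> 2 * norm (F t) \<and> norm (F t) < min d r0 * norm u"
    by eventually_elim blast
  with assms(2) have "\<exists>\<^sub>F t in at s. P (\<phi> t) \<and> t \<noteq> s \<and> t \<in> \<Omega>1 \<and>
      norm (t - s) \<le> 2 * norm (F t) \<and> norm (F t) < min d r0 * norm u"
    by (rule frequently_eventually_frequently)
  then obtain t where t: "P (\<phi> t)" "t \<noteq> s" "t \<in> \<Omega>1" "norm (t - s) \<le> 2 * norm (F t)"
    "norm (F t) < min d r0 * norm u"
    using frequently_ex by blast
  obtain r where r: "F t = r *\<^sub>R u" using DIM_1_scaleR_multiple[OF assms(1) \<open>u \<noteq> 0\<close>] .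
  have "\<bar>r\<bar> < min d r0" using t(5) \<open>u \<noteq> 0\<close> by (simp add: r)
  moreover have "r \<noteq> 0" using t(2,4) r by auto
  moreover have "\<phi> t = \<rho> r" using on_curve t(3) r calculation(1) by simp
  ultimately show "\<exists>r\<in>UNIV. r \<noteq> 0 \<and> dist r 0 < d \<and> P (\<rho> r)"
    using t(1) by (auto simp: dist_real_def)
qed

lemma zeros_not_accumulating:
  fixes l :: "'b \<Rightarrow> real"
  assumes "linear l" "l \<noteq> (\<lambda>_. 0)" "DIM('a) = 1"
  shows "\<not> s islimpt {t. l (\<phi> t) = 0}"
proof
  assume "s islimpt {t. l (\<phi> t) = 0}"
  then have zeros: "\<exists>\<^sub>F t in at s. l (\<phi> t) = 0"
    by (simp add: islimpt_iff_eventually frequently_def)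
  have "((\<lambda>t. l (\<phi> t)) \<longlongrightarrow> l (\<phi> s)) (at s)"
    using assms(1) has_derivative
    by (metis bounded_linear.has_derivative has_derivative_continuous isCont_def
        linear_conv_bounded_linear)
  then have "l (\<rho> 0) = 0"
    using limit_frequently_eq[OF at_neq_bot zeros] curve_at_0 by simp
  moreover have "\<exists>\<^sub>F r in at 0. l (\<rho> r) = 0"
    using frequently_on_curve[OF assms(3) zeros] .
  ultimately have "l x = 0" for x
    using curve_nondegenerate_zero_if_frequently_zero[OF curve assms(1)]
      span_eq_UNIV_if_DIM_1[OF assms(3)] by blast
  then show False using assms(2) by auto
qed

end

lemma nondegenerate_map_differentiable:
  "nondegenerate_map \<phi> \<Omega> \<Longrightarrow> \<forall>x\<in>\<Omega>. \<phi> differentiable (at x)"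
  unfolding nondegenerate_map_def nondegenerate_at_def differentiable_def by blast

lemma nondegenerate_map_imp_point:
  assumes "nondegenerate_map \<phi> \<Omega>" "s \<in> \<Omega>"
  obtains \<phi>' L v \<Omega>1 r0 \<rho> where "nondegenerate_point \<phi> s \<phi>' L v \<Omega>1 r0 \<rho>"
proof -
  have "continuous_on \<Omega> \<phi>"
    using nondegenerate_map_differentiable[OF assms(1)]
    by (simp add: differentiable_at_imp_differentiable_on differentiable_imp_continuous_on)
  then show ?thesis
    using nondegenerate_atE that assms unfolding nondegenerate_map_def by metis
qed

lemma nondegenerate_map_not_vanishes_to_order:
  fixes \<phi> :: "'a::euclidean_space \<Rightarrow> 'b::euclidean_space" and l :: "'b \<Rightarrow> real"
  assumes "nondegenerate_map \<phi> \<Omega>" "s \<in> \<Omega>" "linear l" "l \<noteq> (\<lambda>_. 0)" "1 \<le> p" "DIM('b) \<le> Suc p"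
  shows "\<not> vanishes_to_order (\<lambda>t. l (\<phi> t)) s p"
  using nondegenerate_map_imp_point[OF assms(1,2)]
    nondegenerate_point.not_vanishes_to_order[OF _ assms(3-6)] by metis

lemma nondegenerate_map_zeros_not_accumulating:
  fixes \<phi> :: "'a::euclidean_space \<Rightarrow> 'b::euclidean_space" and l :: "'b \<Rightarrow> real"
  assumes "nondegenerate_map \<phi> \<Omega>" "s \<in> \<Omega>" "linear l" "l \<noteq> (\<lambda>_. 0)" "DIM('a) = 1"
  shows "\<not> s islimpt {t. l (\<phi> t) = 0}"
  using nondegenerate_map_imp_point[OF assms(1,2)]
    nondegenerate_point.zeros_not_accumulating[OF _ assms(3-5)] by metis

theorem proposition5p1:
  fixes \<phi> :: "'a::euclidean_space \<Rightarrow> 'b::euclidean_space"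
    and \<Omega> :: "'a set" and l :: "'b \<Rightarrow> real"
  assumes "open \<Omega>"
    and "ntimes_differentiable_on (DIM('b) - 1) \<phi> \<Omega>"
    and "nondegenerate_map \<phi> \<Omega>"
    and "linear l" and "l \<noteq> (\<lambda>_. 0)"
  shows "negligible {s \<in> \<Omega>. l (\<phi> s) = 0} \<and>
         (DIM('a) = 1 \<longrightarrow> (\<forall>s\<in>\<Omega>. \<not> s islimpt {t \<in> \<Omega>. l (\<phi> t) = 0}))"
proof -
  let ?g = "\<lambda>t. l (\<phi> t)"
  obtain m where m: "ntimes_differentiable_on (Suc m) \<phi> \<Omega>" "DIM('b) - 1 \<le> Suc m"
    using ntimes_differentiable_onE[OF assms(2) nondegenerate_map_differentiable[OF assms(3)]] .
  have "ntimes_differentiable_on (Suc m) ?g \<Omega>"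
    using assms(4) m(1) linear_conv_bounded_linear ntimes_differentiable_on_linear_compose by blast
  then have "negligible {s \<in> \<Omega>. ?g s = 0 \<and> \<not> vanishes_to_order ?g s (Suc m)}"
    by (rule negligible_zeros_not_vanishing_to_order[OF assms(1)])
  moreover have "{s \<in> \<Omega>. ?g s = 0} \<subseteq> {s \<in> \<Omega>. ?g s = 0 \<and> \<not> vanishes_to_order ?g s (Suc m)}"
    using nondegenerate_map_not_vanishes_to_order[OF assms(3) _ assms(4,5), of _ "Suc m"] m(2)
    by auto
  ultimately have "negligible {s \<in> \<Omega>. ?g s = 0}"
    by (rule negligible_subset)
  moreover have "\<not> s islimpt {t \<in> \<Omega>. ?g t = 0}" if "DIM('a) = 1" "s \<in> \<Omega>" for s
    using nondegenerate_map_zeros_not_accumulating[OF assms(3) that(2) assms(4,5) that(1)]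
      islimpt_subset[of s "{t \<in> \<Omega>. ?g t = 0}" "{t. ?g t = 0}"]
    by auto
  ultimately show ?thesis by blast
qed

end
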